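(* Let $V$ be a vector space over a field $k$ and let $\mathcal{P}_{k\mathrm{fin}}(V)$ be the set of finite-dimensional $k$-subspaces of $V$. Let $f:\mathcal{P}_{k\mathrm{fin}}(V)\to\mathbb{R}$ satisfy $f(W_1\cap W_2)+f(W_1+W_2)\leq f(W_1)+f(W_2)$ for all $W_1,W_2\in\mathcal{P}_{k\mathrm{fin}}(V)$, and assume that $m=\min_{W\in\mathcal{P}_{k\mathrm{fin}}(V),\,W\neq\{0\}}f(W)$ exists. If $W_1$ and $W_2$ are two atoms of $f$, then $W_1=W_2$ or $W_1\cap W_2=\{0\}$.
   Context: A fragment for $f$ is a nonzero finite-dimensional subspace $W$ with $f(W)=m$; an atom for $f$ is a fragment of minimal dimension among fragments. *)

theory Defs
  imports Complex_Main
begin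

definition fin_subspace :: "('a::field \<Rightarrow> 'b::ab_group_add \<Rightarrow> 'b) \<Rightarrow> 'b set \<Rightarrow> bool" where
  "fin_subspace scale W \<longleftrightarrow>
     module.subspace scale W \<and> (\<exists>B. finite B \<and> module.span scale B = W)"

definition subspace_sum :: "'b::ab_group_add set \<Rightarrow> 'b set \<Rightarrow> 'b set" where
  "subspace_sum W1 W2 = {x + y | x y. x \<in> W1 \<and> y \<in> W2}"

definition is_min_nonzero :: "('a::field \<Rightarrow> 'b::ab_group_add \<Rightarrow> 'b) \<Rightarrow> ('b set \<Rightarrow> real) \<Rightarrow> real \<Rightarrow> bool" where
  "is_min_nonzero scale f m \<longleftrightarrow>
     (\<exists>W. fin_subspace scale W \<and> W \<noteq> {0} \<and> f W = m) \<and>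
     (\<forall>W. fin_subspace scale W \<and> W \<noteq> {0} \<longrightarrow> m \<le> f W)"

definition fragment :: "('a::field \<Rightarrow> 'b::ab_group_add \<Rightarrow> 'b) \<Rightarrow> ('b set \<Rightarrow> real) \<Rightarrow> real \<Rightarrow> 'b set \<Rightarrow> bool" where
  "fragment scale f m W \<longleftrightarrow> fin_subspace scale W \<and> W \<noteq> {0} \<and> f W = m"

definition atom :: "('a::field \<Rightarrow> 'b::ab_group_add \<Rightarrow> 'b) \<Rightarrow> ('b set \<Rightarrow> real) \<Rightarrow> real \<Rightarrow> 'b set \<Rightarrow> bool" where
  "atom scale f m W \<longleftrightarrow> fragment scale f m W \<and>
     (\<forall>W'. fragment scale f m W' \<longrightarrow> vector_space.dim scale W \<le> vector_space.dim scale W')"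

end

theory Submission
  imports Defs
begin

text \<open>If two atoms W1, W2 meet nontrivially, then f(W1 \<inter> W2) + f(W1 + W2) \<le> 2m together with
  the lower bound m for both terms forces W1 \<inter> W2 to be a fragment. A fragment contained in an
  atom has at least its dimension, hence equals it; so W1 = W1 \<inter> W2 = W2.\<close>

context vector_space
begin

lemma fin_subspace_subset:
  assumes "fin_subspace scale W" "subspace U" "U \<subseteq> W"
  shows "fin_subspace scale U"
proof -
  obtain B where B: "finite B" "span B = W"
    using assms(1) unfolding fin_subspace_def by blast
  obtain A where A: "A \<subseteq> U" "independent A" "U \<subseteq> span A"
    using maximal_independent_subset[of U] by blast
  have "finite A"
    using independent_span_bound[OF B(1) A(2)] A(1) assms(3) B(2) span_superset by blast
  moreover have "span A = U"
    using span_subspace[OF A(1,3) assms(2)] .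
  ultimately show ?thesis
    using assms(2) unfolding fin_subspace_def by blast
qed

lemma fin_subspace_Int:
  assumes "fin_subspace scale U" "subspace W"
  shows "fin_subspace scale (U \<inter> W)"
  using assms fin_subspace_subset[OF assms(1)] subspace_inter
  unfolding fin_subspace_def by blast

lemma fin_subspace_sum:
  assumes "fin_subspace scale U" "fin_subspace scale W"
  shows "fin_subspace scale (subspace_sum U W)"
proof -
  obtain A B where "finite A" "span A = U" "finite B" "span B = W"
    using assms unfolding fin_subspace_def by blast
  then have "span (A \<union> B) = subspace_sum U W" "finite (A \<union> B)"
    unfolding subspace_sum_def span_Un by simp_all
  then show ?thesis
    unfolding fin_subspace_def by (metis subspace_span)
qed

lemma subspace_sum_superset_left:
  assumes "subspace W"
  shows "U \<subseteq> subspace_sum U W"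
  using subspace_0[OF assms] unfolding subspace_sum_def by force

lemma fin_subspace_eq_of_dim_le:
  assumes "subspace U" "U \<subseteq> W" "fin_subspace scale W" "dim W \<le> dim U"
  shows "U = W"
proof -
  obtain B where B: "finite B" "span B = W"
    using assms(3) unfolding fin_subspace_def by blast
  obtain A where A: "A \<subseteq> U" "independent A" "U \<subseteq> span A"
    using maximal_independent_subset[of U] by blast
  obtain C where C: "A \<subseteq> C" "C \<subseteq> W" "independent C" "W \<subseteq> span C"
    using maximal_independent_subset_extend[of A W] A(1,2) assms(2) by blast
  have "finite C"
    using independent_span_bound[OF B(1) C(3)] C(2) B(2) span_superset by blast
  moreover have "card C \<le> card A"
    using basis_card_eq_dim[OF C(2,4,3)] basis_card_eq_dim[OF A(1,3,2)] assms(4) by simp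
  ultimately have "C = A"
    using C(1) card_seteq by blast
  then show ?thesis
    using span_subspace[OF A(1,3) assms(1)] C(4) assms(2) by blast
qed

lemma fragment_Int_sum:
  assumes submod: "\<And>U1 U2. fin_subspace scale U1 \<Longrightarrow> fin_subspace scale U2 \<Longrightarrow>
        f (U1 \<inter> U2) + f (subspace_sum U1 U2) \<le> f U1 + f U2"
    and "is_min_nonzero scale f m"
    and W1: "fragment scale f m W1" and W2: "fragment scale f m W2"
    and "W1 \<inter> W2 \<noteq> {0}"
  shows "fragment scale f m (W1 \<inter> W2) \<and> fragment scale f m (subspace_sum W1 W2)"
proof -
  have fin: "fin_subspace scale W1" "fin_subspace scale W2" and "W1 \<noteq> {0}"
    and f_eq: "f W1 = m" "f W2 = m"
    using W1 W2 unfolding fragment_def by auto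
  have fin_Int: "fin_subspace scale (W1 \<inter> W2)"
    using fin_subspace_Int fin unfolding fin_subspace_def by blast
  have fin_sum: "fin_subspace scale (subspace_sum W1 W2)"
    using fin_subspace_sum[OF fin] .
  have "W1 \<subseteq> subspace_sum W1 W2"
    using fin(2) subspace_sum_superset_left unfolding fin_subspace_def by blast
  then have "subspace_sum W1 W2 \<noteq> {0}"
    using \<open>W1 \<noteq> {0}\<close> fin(1) subspace_0 unfolding fin_subspace_def by blast
  then have "m \<le> f (W1 \<inter> W2)" "m \<le> f (subspace_sum W1 W2)"
    using assms(2) fin_Int fin_sum \<open>W1 \<inter> W2 \<noteq> {0}\<close> unfolding is_min_nonzero_def by auto
  moreover have "f (W1 \<inter> W2) + f (subspace_sum W1 W2) \<le> 2 * m"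
    using submod[OF fin] f_eq by simp
  ultimately show ?thesis
    using fin_Int fin_sum \<open>W1 \<inter> W2 \<noteq> {0}\<close> \<open>subspace_sum W1 W2 \<noteq> {0}\<close>
    unfolding fragment_def by auto
qed

lemma atom_eq_of_fragment_subset:
  assumes "atom scale f m W" "fragment scale f m U" "U \<subseteq> W"
  shows "U = W"
  using assms fin_subspace_eq_of_dim_le
  unfolding atom_def fragment_def fin_subspace_def by blast

end

theorem mainTheorem17:
  fixes scale :: "'a::field \<Rightarrow> 'b::ab_group_add \<Rightarrow> 'b"
    and f :: "'b set \<Rightarrow> real" and m :: real and W1 W2 :: "'b set"
  assumes "vector_space scale"
    and submod: "\<And>U1 U2. fin_subspace scale U1 \<Longrightarrow> fin_subspace scale U2 \<Longrightarrow>
        f (U1 \<inter> U2) + f (subspace_sum U1 U2) \<le> f U1 + f U2"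
    and "is_min_nonzero scale f m"
    and "atom scale f m W1" and "atom scale f m W2"
  shows "W1 = W2 \<or> W1 \<inter> W2 = {0}"
proof (rule disjCI)
  interpret vector_space scale by fact
  assume "W1 \<inter> W2 \<noteq> {0}"
  then have "fragment scale f m (W1 \<inter> W2)"
    using fragment_Int_sum[OF submod assms(3)] assms(4,5) unfolding atom_def by blast
  then have "W1 \<inter> W2 = W1" "W1 \<inter> W2 = W2"
    using atom_eq_of_fragment_subset assms(4,5) by blast+
  then show "W1 = W2" by simp
qed

end
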